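(* For all integers $s\geq 3$, $\chi(\operatorname{KG}(2s+2,2)_{s-\operatorname{stab}})=s+2$, and $\operatorname{KG}(2s+2,2)_{s-\operatorname{stab}}$ is not $\chi$-critical.
   Context: For integers $s,k\geq 2$ and $n\geq ks$, a subset $S\subseteq[n]=\{1,\dots,n\}$ is $s$-stable if $s\leq |i-j|\leq n-s$ for all distinct $i,j\in S$. The $s$-stable Kneser graph $\operatorname{KG}(n,k)_{s-\operatorname{stab}}$ has as vertices the $s$-stable $k$-subsets of $[n]$, two vertices being adjacent iff they are disjoint. A graph $G$ is $\chi$-critical (vertex critical) if every proper subgraph of $G$ has chromatic number strictly less than $\chi(G)$. *)

theory Defs
  imports Main
begin

definition s_stable :: "nat \<Rightarrow> nat \<Rightarrow> nat set \<Rightarrow> bool" where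
  "s_stable n s S \<longleftrightarrow> S \<subseteq> {1..n} \<and>
     (\<forall>i\<in>S. \<forall>j\<in>S. i \<noteq> j \<longrightarrow>
        int s \<le> \<bar>int i - int j\<bar> \<and> \<bar>int i - int j\<bar> \<le> int n - int s)"

definition stable_kneser_vertices :: "nat \<Rightarrow> nat \<Rightarrow> nat \<Rightarrow> nat set set" where
  "stable_kneser_vertices n k s = {S. s_stable n s S \<and> card S = k}"

definition kneser_adj :: "nat set \<Rightarrow> nat set \<Rightarrow> bool" where
  "kneser_adj A B \<longleftrightarrow> A \<inter> B = {}"

text \<open>A graph is given by a vertex set V and a symmetric adjacency relation E
  (considered only on V). Proper colouring with colours {0..<m}.\<close>
definition proper_colouring :: "'a set \<Rightarrow> ('a \<Rightarrow> 'a \<Rightarrow> bool) \<Rightarrow> nat \<Rightarrow> ('a \<Rightarrow> nat) \<Rightarrow> bool" where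
  "proper_colouring V E m f \<longleftrightarrow>
     (\<forall>v\<in>V. f v < m) \<and> (\<forall>u\<in>V. \<forall>v\<in>V. E u v \<longrightarrow> f u \<noteq> f v)"

definition chromatic_number :: "'a set \<Rightarrow> ('a \<Rightarrow> 'a \<Rightarrow> bool) \<Rightarrow> nat" where
  "chromatic_number V E = (LEAST m. \<exists>f. proper_colouring V E m f)"

text \<open>Vertex-critical: every proper (induced) subgraph has smaller chromatic number.\<close>
definition chi_critical :: "'a set \<Rightarrow> ('a \<Rightarrow> 'a \<Rightarrow> bool) \<Rightarrow> bool" where
  "chi_critical V E \<longleftrightarrow> (\<forall>W. W \<subset> V \<longrightarrow> chromatic_number W E < chromatic_number V E)"

end

theory Submission
  imports Defs
begin

text \<open>
  Colouring a pair by its maximum uses the \<open>s+2\<close> colours \<open>s+1, \<dots>, 2s+2\<close>. Conversely,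
  as \<open>2s+2 < 3s\<close> the graph contains no three pairs \<open>{a,b}, {b,c}, {a,c}\<close>, so each colour
  class, being an intersecting family of pairs, is a star with a centre. Suppose \<open>s+1\<close> colours
  suffice even after deleting the vertex \<open>{1, s+2}\<close>. Then some \<open>s+1\<close> points avoid all
  centres, so they span no remaining vertex. Viewing \<open>{1..2s+2}\<close> as \<open>\<int>/(2s+2)\<close>, such a
  set contains no pair \<open>{i, i+s}\<close>, so rotation by \<open>s\<close> maps it onto its complement; it is
  then invariant under rotation by \<open>2s \<equiv> -2\<close>, i.e. it is the set of odd or of even numbers,
  and both span a vertex other than \<open>{1, s+2}\<close>. So the vertex-deleted graph still needs
  \<open>s+2\<close> colours.
\<close>

lemma pair_in_stable_kneser_vertices:
  assumes "1 \<le> i" "i < j" "j \<le> n" "s \<le> j - i" "j - i + s \<le> n"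
  shows "{i, j} \<in> stable_kneser_vertices n 2 s"
  using assms unfolding stable_kneser_vertices_def s_stable_def by auto

lemma stable_kneser_vertex_dist:
  assumes "A \<in> stable_kneser_vertices n k s" "x \<in> A" "y \<in> A" "x \<noteq> y"
  shows "int s \<le> \<bar>int x - int y\<bar>" and "\<bar>int x - int y\<bar> \<le> int n - int s"
  using assms unfolding stable_kneser_vertices_def s_stable_def by blast+

lemma stable_kneser_vertex_card:
  "A \<in> stable_kneser_vertices n k s \<Longrightarrow> card A = k"
  unfolding stable_kneser_vertices_def by blast

lemma stable_kneser_vertex_subset:
  "A \<in> stable_kneser_vertices n k s \<Longrightarrow> A \<subseteq> {1..n}"
  unfolding stable_kneser_vertices_def s_stable_def by blast

lemma stable_kneser_triangle_free:
  assumes "n < 3 * s"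
    and "{a, b} \<in> stable_kneser_vertices n 2 s" "{b, c} \<in> stable_kneser_vertices n 2 s"
      "{a, c} \<in> stable_kneser_vertices n 2 s"
  shows "a = b \<or> b = c \<or> a = c"
proof (rule ccontr)
  assume "\<not> ?thesis"
  then have "a \<noteq> b" "b \<noteq> c" "a \<noteq> c" by auto
  then have "int s \<le> \<bar>int a - int b\<bar>" "\<bar>int a - int b\<bar> \<le> int n - int s"
    "int s \<le> \<bar>int b - int c\<bar>" "\<bar>int b - int c\<bar> \<le> int n - int s"
    "int s \<le> \<bar>int a - int c\<bar>" "\<bar>int a - int c\<bar> \<le> int n - int s"
    using stable_kneser_vertex_dist[OF assms(2), of a b] stable_kneser_vertex_dist[OF assms(3), of b c]
      stable_kneser_vertex_dist[OF assms(4), of a c] by auto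
  then show False using \<open>n < 3 * s\<close> by arith
qed

lemma card_2_obtain_other:
  assumes "card B = 2" "b \<in> B"
  obtains c where "B = {b, c}" "c \<noteq> b"
  using assms by (auto simp: card_2_iff)

lemma intersecting_triangle_free_pairs_common_element:
  assumes pairs: "\<And>A. A \<in> K \<Longrightarrow> card A = 2"
    and intersecting: "\<And>A B. A \<in> K \<Longrightarrow> B \<in> K \<Longrightarrow> A \<inter> B \<noteq> {}"
    and triangle_free: "\<And>a b c. {a, b} \<in> K \<Longrightarrow> {b, c} \<in> K \<Longrightarrow> {a, c} \<in> K \<Longrightarrow>
      a = b \<or> b = c \<or> a = c"
  shows "\<exists>x. \<forall>B\<in>K. x \<in> B"
proof (rule ccontr)
  assume no_common: "\<not> ?thesis"
  then obtain A where A: "A \<in> K" by blast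
  then obtain a b where ab: "A = {a, b}" "a \<noteq> b" using pairs by (meson card_2_iff)
  obtain B where B: "B \<in> K" "a \<notin> B" using no_common by blast
  obtain C where C: "C \<in> K" "b \<notin> C" using no_common by blast
  have "b \<in> B" using intersecting[OF A B(1)] ab B(2) by auto
  with pairs[OF B(1)] obtain c where Bc: "B = {b, c}" "c \<noteq> b" by (rule card_2_obtain_other)
  have "a \<in> C" using intersecting[OF A C(1)] ab C(2) by auto
  with pairs[OF C(1)] obtain c' where Cc: "C = {a, c'}" "c' \<noteq> a" by (rule card_2_obtain_other)
  have "c' = c" using intersecting[OF B(1) C(1)] Bc Cc B(2) C(2) by blast
  then have "{a, c} \<in> K" "c \<noteq> a" using C Cc by auto
  then show False using triangle_free[of a b c] A ab B Bc by auto
qed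

lemma proper_colouring_subset:
  "proper_colouring V E m f \<Longrightarrow> W \<subseteq> V \<Longrightarrow> proper_colouring W E m f"
  unfolding proper_colouring_def by blast

lemma chromatic_number_eqI:
  assumes "proper_colouring V E m f"
    and "\<And>m' f'. proper_colouring V E m' f' \<Longrightarrow> m \<le> m'"
  shows "chromatic_number V E = m"
  unfolding chromatic_number_def using assms by (blast intro: Least_equality)

lemma stable_kneser_max_colouring:
  "proper_colouring (stable_kneser_vertices n 2 s) kneser_adj (n - s) (\<lambda>A. Max A - (s + 1))"
proof -
  have max_bounds: "Max A \<in> A \<and> s + 1 \<le> Max A \<and> Max A \<le> n"
    if A: "A \<in> stable_kneser_vertices n 2 s" for A
  proof -
    have card: "card A = 2" and sub: "A \<subseteq> {1..n}"
      using stable_kneser_vertex_card[OF A] stable_kneser_vertex_subset[OF A] .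
    then have fin: "finite A" and ne: "A \<noteq> {}" by (auto intro: card_ge_0_finite)
    then have max_in: "Max A \<in> A" by (rule Max_in)
    with card obtain y where "A = {Max A, y}" "y \<noteq> Max A" by (rule card_2_obtain_other)
    then have y: "y \<in> A" "y \<noteq> Max A" by auto
    have "y \<le> Max A" using fin y(1) by (rule Max_ge)
    moreover have "int s \<le> \<bar>int (Max A) - int y\<bar>"
      using stable_kneser_vertex_dist[OF A max_in y(1)] y(2) by simp
    moreover have "1 \<le> y" "Max A \<le> n" using sub y max_in by auto
    ultimately show ?thesis using max_in by linarith
  qed
  show ?thesis
    unfolding proper_colouring_def kneser_adj_def
  proof (intro conjI ballI impI)
    fix A assume "A \<in> stable_kneser_vertices n 2 s"
    with max_bounds show "Max A - (s + 1) < n - s" by fastforce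
  next
    fix A B assume A: "A \<in> stable_kneser_vertices n 2 s" and B: "B \<in> stable_kneser_vertices n 2 s"
      and "A \<inter> B = {}"
    have "Max A \<noteq> Max B" using max_bounds[OF A] max_bounds[OF B] \<open>A \<inter> B = {}\<close> by auto
    then show "Max A - (s + 1) \<noteq> Max B - (s + 1)"
      using max_bounds[OF A] max_bounds[OF B] by linarith
  qed
qed

lemma image_image_eq_if_disjoint_half:
  assumes "finite X" "inj_on \<sigma> X" "\<sigma> ` X \<subseteq> X" "U \<subseteq> X" "2 * card U = card X"
    and "\<sigma> ` U \<inter> U = {}"
  shows "\<sigma> ` \<sigma> ` U = U"
proof -
  have "card (\<sigma> ` U) = card (X - U)"
    using assms by (simp add: card_image inj_on_subset card_Diff_subset finite_subset)
  then have image_U: "\<sigma> ` U = X - U"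
    using assms by (intro card_subset_eq) auto
  have "\<sigma> ` (X - U) = \<sigma> ` X - \<sigma> ` U"
    using assms by (intro inj_on_image_set_diff) auto
  also have "\<dots> = U" using assms endo_inj_surj[of X \<sigma>] image_U by auto
  finally show ?thesis using image_U by simp
qed

lemma mem_if_step_two_down_closed:
  fixes U :: "nat set"
  assumes closed: "\<And>i. i \<in> U \<Longrightarrow> 3 \<le> i \<Longrightarrow> i - 2 \<in> U"
    and "i \<in> U" "1 \<le> j" "j \<le> i" "even (i - j)"
  shows "j \<in> U"
  using assms(2-)
proof (induction i rule: less_induct)
  case (less i)
  show ?case
  proof (cases "i = j")
    case False
    with less.prems have "j \<le> i - 2" "3 \<le> i" by presburger+
    with less show ?thesis by (intro less.IH[of "i - 2"] closed) auto
  qed (use less.prems in simp)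
qed

text \<open>The rotation \<open>i \<mapsto> i + s\<close> of \<open>{1..2s+2}\<close> read modulo \<open>2s+2\<close>.\<close>
definition rotation :: "nat \<Rightarrow> nat \<Rightarrow> nat" where
  "rotation s i = (if i \<le> s + 2 then i + s else i - (s + 2))"

lemma rotation_in_range: "i \<in> {1..2*s+2} \<Longrightarrow> rotation s i \<in> {1..2*s+2}"
  by (auto simp: rotation_def)

lemma inj_on_rotation: "inj_on (rotation s) {1..2*s+2}"
  by (auto simp: inj_on_def rotation_def split: if_splits)

lemma rotation_rotation:
  "3 \<le> i \<Longrightarrow> i \<le> 2*s+2 \<Longrightarrow> rotation s (rotation s i) = i - 2"
  "rotation s (rotation s 1) = 2*s+1"
  "rotation s (rotation s 2) = 2*s+2"
  by (auto simp: rotation_def)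

lemma rotation_pair_in_stable_kneser_vertices:
  assumes "0 < s" "i \<in> {1..2*s+2}"
  shows "{i, rotation s i} \<in> stable_kneser_vertices (2*s+2) 2 s" "{i, rotation s i} \<noteq> {1, s+2}"
proof -
  show "{i, rotation s i} \<in> stable_kneser_vertices (2*s+2) 2 s"
  proof (cases "i \<le> s + 2")
    case True
    then show ?thesis using assms
      by (auto simp: rotation_def intro: pair_in_stable_kneser_vertices)
  next
    case False
    then have "{rotation s i, i} \<in> stable_kneser_vertices (2*s+2) 2 s"
      using assms by (auto simp: rotation_def intro: pair_in_stable_kneser_vertices)
    then show ?thesis by (simp add: insert_commute)
  qed
  show "{i, rotation s i} \<noteq> {1, s+2}"
    by (auto simp: rotation_def doubleton_eq_iff)
qed

text \<open>
  A half-size set containing no pair \<open>{i, rotation s i}\<close> is swapped with its complement by the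
  rotation, hence closed under \<open>i \<mapsto> i - 2 (mod 2s+2)\<close>.
\<close>
lemma rotation_avoiding_half_odds_or_evens:
  assumes U: "U \<subseteq> {1..2*s+2}" "card U = s + 1"
    and avoid: "\<And>i. i \<in> U \<Longrightarrow> rotation s i \<notin> U"
  shows "(\<forall>j. odd j \<and> j \<le> 2*s+1 \<longrightarrow> j \<in> U) \<or> (\<forall>j. even j \<and> 2 \<le> j \<and> j \<le> 2*s+2 \<longrightarrow> j \<in> U)"
proof -
  have "rotation s ` rotation s ` U = U"
    using U rotation_in_range avoid
    by (intro image_image_eq_if_disjoint_half[where X = "{1..2*s+2}"] inj_on_rotation) auto
  then have closed: "rotation s (rotation s i) \<in> U" if "i \<in> U" for i
    using that by blast
  have step: "i - 2 \<in> U" if "i \<in> U" "3 \<le> i" for i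
    using closed[OF that(1)] rotation_rotation(1)[OF that(2)] U(1) that(1) by auto
  obtain u where u: "u \<in> U" using U(2) by fastforce
  then have "1 \<le> u" using U(1) by auto
  show ?thesis
  proof (cases "odd u")
    case True
    then have "1 \<in> U" using mem_if_step_two_down_closed[OF step u] \<open>1 \<le> u\<close> by simp
    then have "2*s+1 \<in> U" using closed rotation_rotation(2) by metis
    then show ?thesis
      using mem_if_step_two_down_closed[OF step, of "2*s+1"] by (simp add: odd_pos Suc_leI)
  next
    case False
    then have "2 \<le> u" using \<open>1 \<le> u\<close> by presburger
    with False have "2 \<in> U" using mem_if_step_two_down_closed[OF step u] by simp
    then have "2*s+2 \<in> U" using closed rotation_rotation(3) by metis
    then show ?thesis
      using mem_if_step_two_down_closed[OF step, of "2*s+2"] by simp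
  qed
qed

lemma half_subset_contains_stable_pair:
  assumes s: "3 \<le> s" and U: "U \<subseteq> {1..2*s+2}" "card U = s + 1"
  shows "\<exists>A\<in>stable_kneser_vertices (2*s+2) 2 s. A \<subseteq> U \<and> A \<noteq> {1, s+2}"
proof (rule ccontr)
  assume "\<not> ?thesis"
  then have avoid: "A = {1, s+2}" if "A \<in> stable_kneser_vertices (2*s+2) 2 s" "A \<subseteq> U" for A
    using that by blast
  have no_pair: "\<not> {a, b} \<subseteq> U"
    if "1 \<le> a" "a < b" "b \<le> 2*s+2" "s \<le> b - a" "b - a \<le> s + 2" "{a, b} \<noteq> {1, s+2}" for a b
  proof
    assume "{a, b} \<subseteq> U"
    moreover have "{a, b} \<in> stable_kneser_vertices (2*s+2) 2 s"
      using that by (intro pair_in_stable_kneser_vertices) auto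
    ultimately show False using avoid that(6) by blast
  qed
  have "rotation s i \<notin> U" if "i \<in> U" for i
  proof
    assume "rotation s i \<in> U"
    moreover have "i \<in> {1..2*s+2}" using that U(1) by blast
    ultimately show False
      using avoid rotation_pair_in_stable_kneser_vertices[of s i] s that by auto
  qed
  with U consider "\<And>j. odd j \<Longrightarrow> j \<le> 2*s+1 \<Longrightarrow> j \<in> U"
    | "\<And>j. even j \<Longrightarrow> 2 \<le> j \<Longrightarrow> j \<le> 2*s+2 \<Longrightarrow> j \<in> U"
    using rotation_avoiding_half_odds_or_evens by blast
  then show False
  proof cases
    case 1
    then show False using no_pair[of 1 "s+1"] no_pair[of 3 "s+4"] s
      by (cases "even s") (simp_all add: doubleton_eq_iff)
  next
    case 2
    then show False using no_pair[of 2 "s+2"] no_pair[of 2 "s+3"] s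
      by (cases "even s") (simp_all add: doubleton_eq_iff)
  qed
qed

lemma stable_kneser_colour_class_centre:
  assumes "n < 3 * s" "W \<subseteq> stable_kneser_vertices n 2 s" "proper_colouring W kneser_adj m f"
  shows "\<exists>x. \<forall>A\<in>W. f A = c \<longrightarrow> x \<in> A"
proof -
  let ?K = "{A \<in> W. f A = c}"
  have "\<exists>x. \<forall>A\<in>?K. x \<in> A"
  proof (rule intersecting_triangle_free_pairs_common_element)
    show "card A = 2" if "A \<in> ?K" for A
      using that assms(2) stable_kneser_vertex_card by blast
    show "A \<inter> B \<noteq> {}" if "A \<in> ?K" "B \<in> ?K" for A B
      using that assms(3) unfolding proper_colouring_def kneser_adj_def by auto
    show "a = b \<or> b = c \<or> a = c" if "{a, b} \<in> ?K" "{b, c} \<in> ?K" "{a, c} \<in> ?K" for a b c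
      using that assms(1,2) stable_kneser_triangle_free by blast
  qed
  then show ?thesis by blast
qed

lemma stable_kneser_minus_pair_colours_ge:
  assumes s: "3 \<le> s"
    and colouring: "proper_colouring (stable_kneser_vertices (2*s+2) 2 s - {{1, s+2}}) kneser_adj m f"
  shows "s + 2 \<le> m"
proof (rule ccontr)
  assume "\<not> ?thesis"
  then have m: "m \<le> s + 1" by simp
  let ?W = "stable_kneser_vertices (2*s+2) 2 s - {{1, s+2}}"
  have "\<forall>c. \<exists>x. \<forall>A\<in>?W. f A = c \<longrightarrow> x \<in> A"
    using s colouring by (intro allI stable_kneser_colour_class_centre) auto
  then obtain centre where centre: "\<And>A. A \<in> ?W \<Longrightarrow> centre (f A) \<in> A" by metis
  have "card (centre ` {..<m}) \<le> s + 1"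
    using card_image_le[of "{..<m}" centre] m by simp
  then have "s + 1 \<le> card ({1..2*s+2} - centre ` {..<m})"
    using diff_card_le_card_Diff[of "centre ` {..<m}" "{1..2*s+2}"] by simp
  then obtain U where U: "U \<subseteq> {1..2*s+2} - centre ` {..<m}" "card U = s + 1"
    by (meson obtain_subset_with_card_n)
  then obtain A where A: "A \<in> ?W" "A \<subseteq> U"
    using half_subset_contains_stable_pair[OF s, of U] by blast
  have "f A < m" using A(1) colouring unfolding proper_colouring_def by blast
  then show False using centre[OF A(1)] A(2) U(1) by blast
qed

theorem mainTheorem3:
  fixes s :: nat
  assumes "s \<ge> 3"
  shows "chromatic_number (stable_kneser_vertices (2*s+2) 2 s) kneser_adj = s + 2
         \<and> \<not> chi_critical (stable_kneser_vertices (2*s+2) 2 s) kneser_adj"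
proof -
  let ?V = "stable_kneser_vertices (2*s+2) 2 s"
  let ?W = "?V - {{1, s+2}}"
  let ?f = "\<lambda>A. Max A - (s + 1)"
  have colouring: "proper_colouring ?V kneser_adj (s + 2) ?f"
    using stable_kneser_max_colouring[of "2*s+2" s] by (simp add: numeral_eq_Suc)
  have chi_V: "chromatic_number ?V kneser_adj = s + 2"
  proof (rule chromatic_number_eqI[OF colouring])
    fix m g assume "proper_colouring ?V kneser_adj m g"
    then have "proper_colouring ?W kneser_adj m g" by (rule proper_colouring_subset) blast
    then show "s + 2 \<le> m" using assms by (rule stable_kneser_minus_pair_colours_ge[rotated])
  qed
  have chi_W: "chromatic_number ?W kneser_adj = s + 2"
  proof (rule chromatic_number_eqI)
    show "proper_colouring ?W kneser_adj (s + 2) ?f"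
      using colouring by (rule proper_colouring_subset) blast
  qed (rule stable_kneser_minus_pair_colours_ge[OF assms])
  have "{1, s+2} \<in> ?V"
    using assms by (intro pair_in_stable_kneser_vertices) auto
  then have "?W \<subset> ?V" by blast
  then have "\<not> chi_critical ?V kneser_adj"
    using chi_V chi_W unfolding chi_critical_def by (metis less_irrefl)
  with chi_V show ?thesis by blast
qed

end
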